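(* Let $s,s',t_1,t_1',t_2,t_2',u_{12},u_{1'2},u_{12'},u_{1'2'}$ be states of a pLTS such that the only transitions outgoing from $s,s',u_{12},u_{1'2},u_{12'},u_{1'2'}$ are (for one action $a$) $$s\xrightarrow{a}\tfrac12u_{12}+\tfrac12u_{1'2'},\quad s'\xrightarrow{a}\tfrac12u_{12'}+\tfrac12u_{1'2},$$ $$u_{12}\xrightarrow{a}\tfrac12t_1+\tfrac12t_2,\quad u_{1'2'}\xrightarrow{a}\tfrac12t_1'+\tfrac12t_2',\quad u_{12'}\xrightarrow{a}\tfrac12t_1+\tfrac12t_2',\quad u_{1'2}\xrightarrow{a}\tfrac12t_1'+\tfrac12t_2.$$ Then $s\sim s'$ if and only if $t_1\sim t_1'$ or $t_2\sim t_2'$.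
   Context: A distribution on a countable set $A$ is $d\colon A\to[0,1]\cap\mathbb{Q}$ summing to $1$; the notation $\tfrac12 u+\tfrac12 v$ denotes the distribution giving total probability $\tfrac12$ to each of $u,v$ (probability $1$ to $u$ if $u=v$). A pLTS is $(S,\Sigma,\to)$ with countable $S$, finite $\Sigma$, image-finite $\to\subseteq S\times\Sigma\times\mathcal{D}(S)$. Bisimilarity $\sim$ is the largest equivalence $R$ on $S$ such that $s\,R\,t$ implies every $s\xrightarrow{a}d$ is matched by some $t\xrightarrow{a}d'$ with $d(E)=d'(E)$ for every $R$-class $E$. *)

theory Defs
  imports "HOL-Analysis.Analysis"
begin

definition is_dist :: "('s::countable \<Rightarrow> real) \<Rightarrow> bool" where
  "is_dist d \<longleftrightarrow> (\<forall>x. d x \<in> \<rat> \<and> 0 \<le> d x \<and> d x \<le> 1) \<and> (d has_sum 1) UNIV"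

definition mass :: "('s \<Rightarrow> real) \<Rightarrow> 's set \<Rightarrow> real" where
  "mass d E = infsum d E"

text \<open>The distribution giving total probability 1/2 to each of u, v (probability 1 to u if u = v).\<close>
definition half :: "'s \<Rightarrow> 's \<Rightarrow> 's \<Rightarrow> real" where
  "half u v = (\<lambda>x. (if x = u then 1/2 else 0) + (if x = v then 1/2 else 0))"

definition is_pLTS :: "('s::countable \<times> 'a::finite \<times> ('s \<Rightarrow> real)) set \<Rightarrow> bool" where
  "is_pLTS T \<longleftrightarrow> (\<forall>(s, a, d) \<in> T. is_dist d) \<and> (\<forall>s. finite {(a, d). (s, a, d) \<in> T})"

definition prob_bisim :: "('s \<times> 'a \<times> ('s \<Rightarrow> real)) set \<Rightarrow> ('s \<times> 's) set \<Rightarrow> bool" where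
  "prob_bisim T R \<longleftrightarrow> equiv UNIV R \<and>
     (\<forall>(s, t) \<in> R. \<forall>a d. (s, a, d) \<in> T \<longrightarrow>
        (\<exists>d'. (t, a, d') \<in> T \<and> (\<forall>E \<in> UNIV // R. mass d E = mass d' E)))"

text \<open>Bisimilarity: membership in the largest such equivalence, i.e. in some such equivalence.\<close>
definition bisimilar :: "('s \<times> 'a \<times> ('s \<Rightarrow> real)) set \<Rightarrow> 's \<Rightarrow> 's \<Rightarrow> bool" where
  "bisimilar T s t \<longleftrightarrow> (\<exists>R. prob_bisim T R \<and> (s, t) \<in> R)"

end

theory Submission
  imports Defs
begin

text \<open>If \<open>s \<sim> s'\<close>, the classes of the halves of the two \<open>a\<close>-successors must match up; whichever
  matching occurs, one more step forces \<open>t\<^sub>1 \<sim> t\<^sub>1'\<close> or \<open>t\<^sub>2 \<sim> t\<^sub>2'\<close>. Conversely, from a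
  bisimulation relating \<open>t\<^sub>1, t\<^sub>1'\<close> one obtains a bisimulation relating \<open>s, s'\<close> by closing it
  under the three pairs \<open>(u\<^sub>12, u\<^sub>1'\<^sub>2)\<close>, \<open>(u\<^sub>12', u\<^sub>1'\<^sub>2')\<close>, \<open>(s, s')\<close>; merging classes preserves
  agreement of masses on classes.\<close>

definition bisim_transfer :: "('s \<times> 'a \<times> ('s \<Rightarrow> real)) set \<Rightarrow> ('s \<times> 's) set \<Rightarrow> 's \<Rightarrow> 's \<Rightarrow> bool" where
  "bisim_transfer T R x y \<longleftrightarrow>
     (\<forall>b d. (x, b, d) \<in> T \<longrightarrow> (\<exists>d'. (y, b, d') \<in> T \<and> (\<forall>E \<in> UNIV // R. mass d E = mass d' E)))"

lemma prob_bisim_iff_transfer: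
  "prob_bisim T R \<longleftrightarrow> equiv UNIV R \<and> (\<forall>(x, y) \<in> R. bisim_transfer T R x y)"
  unfolding prob_bisim_def bisim_transfer_def by blast

lemma bisim_transfer_refl: "bisim_transfer T R x x"
  unfolding bisim_transfer_def by blast

lemma bisim_transfer_trans:
  "bisim_transfer T R x y \<Longrightarrow> bisim_transfer T R y z \<Longrightarrow> bisim_transfer T R x z"
  unfolding bisim_transfer_def by metis

lemma half_commute: "half u v = half v u"
  unfolding half_def by (rule ext) simp

lemma mass_half:
  "mass (half u v) E = (if u \<in> E then 1/2 else 0) + (if v \<in> E then 1/2 else 0)"
proof -
  have "mass (half u v) E = infsum (half u v) (E \<inter> {u, v})"
    unfolding mass_def by (rule infsum_cong_neutral) (auto simp: half_def)
  also have "\<dots> = sum (half u v) (E \<inter> {u, v})"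
    by simp
  also have "\<dots> = (if u \<in> E then 1/2 else 0) + (if v \<in> E then 1/2 else 0)"
    by (cases "u = v"; cases "u \<in> E"; cases "v \<in> E") (auto simp: half_def insert_Diff_if)
  finally show ?thesis .
qed

lemma infsum_Union_disjoint:
  fixes f :: "'s \<Rightarrow> 'b::banach"
  assumes "f summable_on UNIV" and "disjoint A"
  shows "infsum f (\<Union>A) = (\<Sum>\<^sub>\<infinity>E\<in>A. infsum f E)"
proof -
  have inj: "inj_on snd (Sigma A id)"
    using assms(2) by (auto simp: inj_on_def disjoint_def)
  have image: "snd ` Sigma A id = \<Union>A"
    by force
  have "f summable_on \<Union>A"
    using assms(1) summable_on_subset_banach by blast
  then have "(f \<circ> snd) summable_on Sigma A id"
    by (metis summable_on_reindex[OF inj] image)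
  then have "(\<Sum>\<^sub>\<infinity>E\<in>A. infsum (\<lambda>y. (f \<circ> snd) (E, y)) (id E)) = infsum (f \<circ> snd) (Sigma A id)"
    by (rule infsum_Sigma_banach)
  also have "\<dots> = infsum f (\<Union>A)"
    using infsum_reindex[OF inj, of f] image by simp
  finally show ?thesis
    by simp
qed

lemma in_class_iff:
  assumes "equiv UNIV R" "E \<in> UNIV // R" "(x, y) \<in> R"
  shows "x \<in> E \<longleftrightarrow> y \<in> E"
  using assms unfolding quotient_def equiv_def by (auto dest: symD transD)

text \<open>Each \<open>R'\<close>-class is the disjoint union of the \<open>R\<close>-classes it contains.\<close>

lemma mass_eq_on_coarser_classes:
  fixes d d' :: "'s \<Rightarrow> real"
  assumes R: "equiv UNIV R" and R': "equiv UNIV R'" and "R \<subseteq> R'"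
    and "d summable_on UNIV" and "d' summable_on UNIV"
    and eq: "\<forall>E \<in> UNIV // R. mass d E = mass d' E"
    and E': "E' \<in> UNIV // R'"
  shows "mass d E' = mass d' E'"
proof -
  define A where "A = {E \<in> UNIV // R. E \<subseteq> E'}"
  have "E' \<subseteq> \<Union>A"
  proof
    fix x assume "x \<in> E'"
    then have "R `` {x} \<subseteq> E'"
      using in_class_iff[OF R' E'] \<open>R \<subseteq> R'\<close> by auto
    moreover have "x \<in> R `` {x}"
      using R unfolding equiv_def refl_on_def by auto
    ultimately show "x \<in> \<Union>A"
      unfolding A_def by (auto intro: quotientI)
  qed
  then have union: "\<Union>A = E'"
    unfolding A_def by auto
  have "disjoint A"
    unfolding A_def disjoint_def using quotient_disj[OF R] by blast
  then have "mass d E' = (\<Sum>\<^sub>\<infinity>E\<in>A. mass d E)" "mass d' E' = (\<Sum>\<^sub>\<infinity>E\<in>A. mass d' E)"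
    unfolding mass_def using infsum_Union_disjoint assms(4,5) union by metis+
  moreover have "(\<Sum>\<^sub>\<infinity>E\<in>A. mass d E) = (\<Sum>\<^sub>\<infinity>E\<in>A. mass d' E)"
    using eq unfolding A_def by (intro infsum_cong) auto
  ultimately show ?thesis
    by simp
qed

lemma mass_half_eq_on_classes_iff:
  assumes R: "equiv UNIV R"
  shows "(\<forall>E \<in> UNIV // R. mass (half p q) E = mass (half p' q') E) \<longleftrightarrow>
           ((p, p') \<in> R \<and> (q, q') \<in> R) \<or> ((p, q') \<in> R \<and> (q, p') \<in> R)"
    (is "?masses \<longleftrightarrow> ?paired")
proof
  have R_sym: "(x, y) \<in> R \<Longrightarrow> (y, x) \<in> R"
    and R_trans: "(x, y) \<in> R \<Longrightarrow> (y, z) \<in> R \<Longrightarrow> (x, z) \<in> R"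
    and R_refl: "(x, x) \<in> R" for x y z
    using R unfolding equiv_def by (auto dest: symD transD simp: refl_on_def)
  assume ?masses
  then have "mass (half p q) (R `` {x}) = mass (half p' q') (R `` {x})" for x
    by (auto intro: quotientI)
  from this[of p] this[of q] show ?paired
    unfolding mass_half using R_refl by (auto split: if_splits dest: R_sym R_trans)
next
  assume ?paired
  then show ?masses
    unfolding mass_half using in_class_iff[OF R] by auto
qed

lemma equiv_rtrancl_Un:
  assumes "equiv UNIV R"
  shows "equiv UNIV ((R \<union> G \<union> G\<inverse>)\<^sup>*)"
proof -
  have "sym (R \<union> G \<union> G\<inverse>)"
    using assms unfolding equiv_def sym_def by blast
  then show ?thesis
    unfolding equiv_def using sym_rtrancl by (auto simp: refl_on_def trans_def)
qed

lemma bisim_transfer_coarsen: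
  assumes "is_pLTS T" "equiv UNIV R" "equiv UNIV R'" "R \<subseteq> R'" "bisim_transfer T R x y"
  shows "bisim_transfer T R' x y"
proof -
  have summable: "d summable_on UNIV" if "(z, b, d) \<in> T" for z b d
    using assms(1) that unfolding is_pLTS_def is_dist_def by (auto simp: summable_on_def)
  show ?thesis
    using assms(5) mass_eq_on_coarser_classes[OF assms(2-4) summable summable]
    unfolding bisim_transfer_def by metis
qed

lemma prob_bisim_rtrancl_Un:
  assumes T: "is_pLTS T" and R: "prob_bisim T R"
    and G: "\<forall>(x, y) \<in> G. bisim_transfer T ((R \<union> G \<union> G\<inverse>)\<^sup>*) x y \<and> bisim_transfer T ((R \<union> G \<union> G\<inverse>)\<^sup>*) y x"
  shows "prob_bisim T ((R \<union> G \<union> G\<inverse>)\<^sup>*)"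
proof -
  define R' where "R' = (R \<union> G \<union> G\<inverse>)\<^sup>*"
  have eqR: "equiv UNIV R"
    using R by (simp add: prob_bisim_def)
  then have eqR': "equiv UNIV R'"
    unfolding R'_def by (rule equiv_rtrancl_Un)
  have one_step: "bisim_transfer T R' x y" if "(x, y) \<in> R \<union> G \<union> G\<inverse>" for x y
  proof (cases "(x, y) \<in> R")
    case True
    then have "bisim_transfer T R x y"
      using R by (auto simp: prob_bisim_iff_transfer)
    then show ?thesis
      using bisim_transfer_coarsen[OF T eqR eqR'] unfolding R'_def by blast
  next
    case False
    then show ?thesis
      using that G unfolding R'_def by blast
  qed
  have "bisim_transfer T R' x z" if "(x, z) \<in> (R \<union> G \<union> G\<inverse>)\<^sup>*" for x z
    using that
  proof (induction rule: rtrancl_induct)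
    case base
    show ?case
      by (rule bisim_transfer_refl)
  next
    case (step y z)
    show ?case
      using bisim_transfer_trans[OF step.IH one_step[OF step.hyps(2)]] .
  qed
  with eqR' show ?thesis
    unfolding R'_def prob_bisim_iff_transfer by blast
qed

lemma bisim_transfer_half:
  assumes "equiv UNIV R"
    and x: "\<And>b d. (x, b, d) \<in> T \<longleftrightarrow> b = a \<and> d = half p q"
    and y: "\<And>b d. (y, b, d) \<in> T \<longleftrightarrow> b = a \<and> d = half p' q'"
    and "((p, p') \<in> R \<and> (q, q') \<in> R) \<or> ((p, q') \<in> R \<and> (q, p') \<in> R)"
  shows "bisim_transfer T R x y"
  using assms mass_half_eq_on_classes_iff[OF assms(1)] unfolding bisim_transfer_def by auto

lemma prob_bisim_half_paired:
  assumes R: "prob_bisim T R" and "(x, y) \<in> R"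
    and x: "\<And>b d. (x, b, d) \<in> T \<longleftrightarrow> b = a \<and> d = half p q"
    and y: "\<And>b d. (y, b, d) \<in> T \<longleftrightarrow> b = a \<and> d = half p' q'"
  shows "((p, p') \<in> R \<and> (q, q') \<in> R) \<or> ((p, q') \<in> R \<and> (q, p') \<in> R)"
proof -
  have "bisim_transfer T R x y" and eqR: "equiv UNIV R"
    using assms(1,2) by (auto simp: prob_bisim_iff_transfer)
  then obtain d' where "(y, a, d') \<in> T" and "\<forall>E \<in> UNIV // R. mass (half p q) E = mass d' E"
    using x unfolding bisim_transfer_def by blast
  then have "\<forall>E \<in> UNIV // R. mass (half p q) E = mass (half p' q') E"
    using y by simp
  then show ?thesis
    using mass_half_eq_on_classes_iff[OF eqR] by blast
qed

context
  fixes T :: "('s::countable \<times> 'a::finite \<times> ('s \<Rightarrow> real)) set"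
    and a :: 'a
    and s s' t1 t1' t2 t2' u12 u1'2 u12' u1'2' :: 's
  assumes s: "\<And>b d. (s, b, d) \<in> T \<longleftrightarrow> b = a \<and> d = half u12 u1'2'"
    and s': "\<And>b d. (s', b, d) \<in> T \<longleftrightarrow> b = a \<and> d = half u12' u1'2"
    and u12: "\<And>b d. (u12, b, d) \<in> T \<longleftrightarrow> b = a \<and> d = half t1 t2"
    and u1'2': "\<And>b d. (u1'2', b, d) \<in> T \<longleftrightarrow> b = a \<and> d = half t1' t2'"
    and u12': "\<And>b d. (u12', b, d) \<in> T \<longleftrightarrow> b = a \<and> d = half t1 t2'"
    and u1'2: "\<And>b d. (u1'2, b, d) \<in> T \<longleftrightarrow> b = a \<and> d = half t1' t2"
begin

lemma gadget_bisimilar_imp: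
  assumes "bisimilar T s s'"
  shows "bisimilar T t1 t1' \<or> bisimilar T t2 t2'"
proof -
  obtain R where R: "prob_bisim T R" and "(s, s') \<in> R"
    using assms unfolding bisimilar_def by blast
  have eqR: "equiv UNIV R"
    using R by (simp add: prob_bisim_def)
  have R_sym: "(x, y) \<in> R \<Longrightarrow> (y, x) \<in> R"
    and R_trans: "(x, y) \<in> R \<Longrightarrow> (y, z) \<in> R \<Longrightarrow> (x, z) \<in> R" for x y z
    using eqR unfolding equiv_def by (auto dest: symD transD)
  have "(u12, u12') \<in> R \<or> (u12, u1'2) \<in> R"
    using prob_bisim_half_paired[OF R \<open>(s, s') \<in> R\<close> s s'] by blast
  then have "(t2, t2') \<in> R \<or> (t1, t1') \<in> R"
    using prob_bisim_half_paired[OF R _ u12 u12'] prob_bisim_half_paired[OF R _ u12 u1'2]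
    by (blast dest: R_sym R_trans)
  then show ?thesis
    using R unfolding bisimilar_def by blast
qed

lemma gadget_bisimilar_if_left:
  assumes T: "is_pLTS T" and "bisimilar T t1 t1'"
  shows "bisimilar T s s'"
proof -
  obtain R where R: "prob_bisim T R" and "(t1, t1') \<in> R"
    using assms(2) unfolding bisimilar_def by blast
  define G where "G = {(u12, u1'2), (u12', u1'2'), (s, s')}"
  define R' where "R' = (R \<union> G \<union> G\<inverse>)\<^sup>*"
  have eqR': "equiv UNIV R'"
    using R unfolding R'_def prob_bisim_def by (blast intro: equiv_rtrancl_Un)
  have pairs: "(t1, t1') \<in> R'" "(u12, u1'2) \<in> R'" "(u1'2', u12') \<in> R'" "(s, s') \<in> R'"
    using \<open>(t1, t1') \<in> R\<close> unfolding R'_def G_def by blast+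
  have R'_refl: "(x, x) \<in> R'" for x
    using eqR' by (simp add: equiv_def refl_on_def)
  have R'_sym: "(x, y) \<in> R' \<Longrightarrow> (y, x) \<in> R'" for x y
    using eqR' unfolding equiv_def by (auto dest: symD)
  have "bisim_transfer T R' x y \<and> bisim_transfer T R' y x" if "(x, y) \<in> G" for x y
    using that pairs R'_refl unfolding G_def
    by (auto intro!: bisim_transfer_half[OF eqR'] simp: s s' u12 u12' u1'2 u1'2' dest: R'_sym)
  then have "prob_bisim T R'"
    unfolding R'_def by (intro prob_bisim_rtrancl_Un[OF T R]) blast
  with pairs(4) show ?thesis
    unfolding bisimilar_def by blast
qed

end

theorem mainTheorem11:
  fixes T :: "('s::countable \<times> 'a::finite \<times> ('s \<Rightarrow> real)) set"
    and a :: 'a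
    and s s' t1 t1' t2 t2' u12 u1'2 u12' u1'2' :: 's
  assumes "is_pLTS T"
    and "\<And>b d. (s, b, d) \<in> T \<longleftrightarrow> b = a \<and> d = half u12 u1'2'"
    and "\<And>b d. (s', b, d) \<in> T \<longleftrightarrow> b = a \<and> d = half u12' u1'2"
    and "\<And>b d. (u12, b, d) \<in> T \<longleftrightarrow> b = a \<and> d = half t1 t2"
    and "\<And>b d. (u1'2', b, d) \<in> T \<longleftrightarrow> b = a \<and> d = half t1' t2'"
    and "\<And>b d. (u12', b, d) \<in> T \<longleftrightarrow> b = a \<and> d = half t1 t2'"
    and "\<And>b d. (u1'2, b, d) \<in> T \<longleftrightarrow> b = a \<and> d = half t1' t2"
  shows "bisimilar T s s' \<longleftrightarrow> bisimilar T t1 t1' \<or> bisimilar T t2 t2'"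
proof -
  have "bisimilar T s s'" if "bisimilar T t2 t2'"
    \<comment> \<open>swapping the indices 1 and 2 maps the gadget onto itself, since \<open>half\<close> is symmetric\<close>
    using gadget_bisimilar_if_left[OF assms(2) assms(3)[unfolded half_commute[of u12']]
        assms(4)[unfolded half_commute[of t1]] assms(5)[unfolded half_commute[of t1']]
        assms(7)[unfolded half_commute[of t1']] assms(6)[unfolded half_commute[of t1]] assms(1) that] .
  then show ?thesis
    using gadget_bisimilar_imp[OF assms(2-7)] gadget_bisimilar_if_left[OF assms(2-7) assms(1)]
    by blast
qed

end
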